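(* Let $(X_n)_{n\in\mathbb{Z}}$ be a strictly stationary sequence jointly regularly varying with index $\alpha>0$, with tail process $(Y_i)_{i\in\mathbb{Z}}$, and assume $\theta:=\Pr(\sup_{i\le-1}|Y_i|\le1)>0$ and that $|Y_n|\to0$ almost surely as $|n|\to\infty$. Fix $0<v<u<\infty$ and let $$N^{(v)}=\sum_i\sum_j\delta_{(T_i^{(v)},\,vZ_{ij})}\Big|_{[0,1]\times\mathbb{E}_v},$$ where $\sum_i\delta_{T_i^{(v)}}$ is a homogeneous Poisson process on $[0,1]$ with intensity $\theta v^{-\alpha}$ and $(\sum_j\delta_{Z_{ij}})_i$ is an i.i.d. sequence of point processes on $\mathbb{E}$, independent of the Poisson process, each distributed as $\sum_{n\in\mathbb{Z}}\delta_{Y_n}$ conditionally on $\{\sup_{i\le-1}|Y_i|\le1\}$. Assume that with probability one the tail process $(Y_i)_{i\in\mathbb{Z}}$ has no two values of opposite sign. Then $\Pr(N^{(v)}\in\Lambda)=1$, where $\Lambda=\Lambda_1\cap\Lambda_2$ with $\Lambda_1=\{\eta\in\mathbf M_p([0,1]\times\mathbb{E}_v):\eta(\{0,1\}\times\mathbb{E}_u)=0=\eta([0,1]\times\{\pm\infty,\pm u\})\}$, $\Lambda_2=\{\eta\in\mathbf M_p([0,1]\times\mathbb{E}_v):\eta(\{t\}\times(v,\infty])\wedge\eta(\{t\}\times[-\infty,-v))=0\text{ for all }t\in[0,1]\}$.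
   Context: $\mathbb{E}=[-\infty,\infty]\setminus\{0\}$, topologized so as to be homeomorphic to $[-1,1]\setminus\{0\}$; $\mathbb{E}_u=\mathbb{E}\setminus[-u,u]$ for $u>0$. $\mathbf M_p(S)$ is the space of Radon point measures on $S$. Joint regular variation with index $\alpha$: for every $k$, $(X_1,\dots,X_k)$ is multivariate regularly varying with index $\alpha$. The tail process $(Y_n)_{n\in\mathbb{Z}}$ is the process with $\Pr(|Y_0|>y)=y^{-\alpha}$ for $y\ge1$ such that the finite-dimensional distributions of $(x^{-1}X_n)_{n\in\mathbb{Z}}$ given $|X_0|>x$ converge to those of $(Y_n)$ as $x\to\infty$; it satisfies $Y_i=|Y_0|\Theta_i$ with $|Y_0|$ independent of $(\Theta_i)$. *)

theory Defs
  imports "HOL-Probability.Probability"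
begin

definition mv_regvar :: "'a measure \<Rightarrow> int set \<Rightarrow> (int \<Rightarrow> 'a \<Rightarrow> real) \<Rightarrow> real \<Rightarrow> bool" where
  "mv_regvar M J X \<alpha> \<longleftrightarrow>
     (\<exists>S. prob_space S \<and> sets S = sets (PiM J (\<lambda>_. borel)) \<and>
          (AE f in S. (MAX i\<in>J. \<bar>f i\<bar>) = 1) \<and>
          (\<forall>(h :: (int \<Rightarrow> real) \<Rightarrow> real) (t::real).
              continuous_on UNIV h \<and> bounded (range h) \<and> 0 < t \<longrightarrow>
              ((\<lambda>x::real.
                  (\<integral>\<omega>. indicator {\<omega>\<in>space M. t * x < (MAX i\<in>J. \<bar>X i \<omega>\<bar>)} \<omega>
                        * h (restrict (\<lambda>i. X i \<omega> / (MAX k\<in>J. \<bar>X k \<omega>\<bar>)) J) \<partial>M)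
                  / measure M {\<omega>\<in>space M. x < (MAX i\<in>J. \<bar>X i \<omega>\<bar>)})
               \<longlongrightarrow> t powr (-\<alpha>) * (\<integral>f. h f \<partial>S)) at_top))"

definition jointly_regvar :: "'a measure \<Rightarrow> (int \<Rightarrow> 'a \<Rightarrow> real) \<Rightarrow> real \<Rightarrow> bool" where
  "jointly_regvar M X \<alpha> \<longleftrightarrow> (\<forall>k::int. 1 \<le> k \<longrightarrow> mv_regvar M {1..k} X \<alpha>)"

definition strictly_stationary :: "'a measure \<Rightarrow> (int \<Rightarrow> 'a \<Rightarrow> real) \<Rightarrow> bool" where
  "strictly_stationary M X \<longleftrightarrow>
     (\<forall>k::int. distr M (PiM UNIV (\<lambda>_::int. borel)) (\<lambda>\<omega> n. X (n + k) \<omega>)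
             = distr M (PiM UNIV (\<lambda>_::int. borel)) (\<lambda>\<omega> n. X n \<omega>))"

definition tail_process :: "'a measure \<Rightarrow> (int \<Rightarrow> 'a \<Rightarrow> real) \<Rightarrow> (int \<Rightarrow> 'a \<Rightarrow> real) \<Rightarrow> real \<Rightarrow> bool" where
  "tail_process M X Y \<alpha> \<longleftrightarrow>
     (\<forall>y::real. 1 \<le> y \<longrightarrow> measure M {\<omega>\<in>space M. y < \<bar>Y 0 \<omega>\<bar>} = y powr (-\<alpha>)) \<and>
     (\<forall>(J::int set) (h :: (int \<Rightarrow> real) \<Rightarrow> real).
        finite J \<and> continuous_on UNIV h \<and> bounded (range h) \<longrightarrow>
        ((\<lambda>x::real.
            (\<integral>\<omega>. indicator {\<omega>\<in>space M. x < \<bar>X 0 \<omega>\<bar>} \<omega> * h (restrict (\<lambda>n. X n \<omega> / x) J) \<partial>M)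
            / measure M {\<omega>\<in>space M. x < \<bar>X 0 \<omega>\<bar>})
         \<longlongrightarrow> (\<integral>\<omega>. h (restrict (\<lambda>n. Y n \<omega>) J) \<partial>M)) at_top)"

definition ecard :: "'b set \<Rightarrow> enat" where
  "ecard A = (if finite A then enat (card A) else \<infinity>)"

definition Eset :: "real \<Rightarrow> ereal set" where
  "Eset u = {x. ereal u < \<bar>x\<bar>}"

definition Mp :: "(real \<times> ereal) set \<Rightarrow> ((real \<times> ereal) set \<Rightarrow> enat) set" where
  "Mp S = {\<eta>. (\<exists>(I::nat set) p. p ` I \<subseteq> S \<and> (\<forall>B. \<eta> B = ecard {k\<in>I. p k \<in> B}))
              \<and> (\<forall>C. compact C \<and> C \<subseteq> S \<longrightarrow> \<eta> C \<noteq> \<infinity>)}"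

definition Lambda1 :: "real \<Rightarrow> real \<Rightarrow> ((real \<times> ereal) set \<Rightarrow> enat) set" where
  "Lambda1 v u = {\<eta> \<in> Mp ({0..1} \<times> Eset v).
      \<eta> ({0, 1} \<times> Eset u) = 0 \<and> \<eta> ({0..1} \<times> {\<infinity>, -\<infinity>, ereal u, - ereal u}) = 0}"

definition Lambda2 :: "real \<Rightarrow> ((real \<times> ereal) set \<Rightarrow> enat) set" where
  "Lambda2 v = {\<eta> \<in> Mp ({0..1} \<times> Eset v).
      \<forall>t\<in>{0..1}. min (\<eta> ({t} \<times> {x. ereal v < x})) (\<eta> ({t} \<times> {x. x < - ereal v})) = 0}"

definition Nv :: "real \<Rightarrow> ('a \<Rightarrow> nat) \<Rightarrow> (nat \<Rightarrow> 'a \<Rightarrow> real) \<Rightarrow> (nat \<Rightarrow> int \<Rightarrow> 'a \<Rightarrow> real)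
                  \<Rightarrow> 'a \<Rightarrow> (real \<times> ereal) set \<Rightarrow> enat" where
  "Nv v K T Z \<omega> B = ecard {(i, j). i < K \<omega> \<and> T i \<omega> \<in> {0..1}
        \<and> ereal (v * Z i j \<omega>) \<in> Eset v \<and> (T i \<omega>, ereal (v * Z i j \<omega>)) \<in> B}"

definition pcount :: "('a \<Rightarrow> nat) \<Rightarrow> (nat \<Rightarrow> 'a \<Rightarrow> real) \<Rightarrow> real set \<Rightarrow> 'a \<Rightarrow> nat" where
  "pcount K T A \<omega> = card {i. i < K \<omega> \<and> T i \<omega> \<in> A}"

definition hom_poisson_01 :: "'a measure \<Rightarrow> real \<Rightarrow> ('a \<Rightarrow> nat) \<Rightarrow> (nat \<Rightarrow> 'a \<Rightarrow> real) \<Rightarrow> bool" where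
  "hom_poisson_01 M lam K T \<longleftrightarrow>
     K \<in> measurable M (count_space UNIV) \<and> (\<forall>i. T i \<in> borel_measurable M) \<and>
     (\<forall>\<omega>\<in>space M. \<forall>i < K \<omega>. T i \<omega> \<in> {0..1}) \<and>
     (\<forall>(m::nat) (A :: nat \<Rightarrow> real set).
        (\<forall>j<m. A j \<in> sets borel \<and> A j \<subseteq> {0..1}) \<and> disjoint_family_on A {..<m} \<longrightarrow>
        prob_space.indep_vars M (\<lambda>_. count_space UNIV) (\<lambda>j. pcount K T (A j)) {..<m} \<and>
        (\<forall>j<m. \<forall>n::nat. measure M {\<omega>\<in>space M. pcount K T (A j) \<omega> = n}
             = (lam * measure lborel (A j)) ^ n / fact n * exp (- (lam * measure lborel (A j)))))"

end

theory Submission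
  imports Defs
begin

text \<open>Every way for \<open>N\<^sup>(\<^sup>v\<^sup>)\<close> to leave \<open>\<Lambda>\<close> is a null event. On the time axis this needs only that
  a homogeneous Poisson process has no point at a fixed time and no double points. On the
  space axis the law of each cluster \<open>(Z\<^sub>i\<^sub>j)\<^sub>j\<close> is absolutely continuous with respect to the law
  of the tail process, so it suffices that the tail process almost surely vanishes at \<open>\<plusminus>\<infinity>\<close>
  (which also makes \<open>N\<^sup>(\<^sup>v\<^sup>)\<close> a Radon point measure), has no values of opposite sign, and never
  takes the modulus \<open>u/v\<close>. The last property comes from the homogeneity of the tail process,
  \<open>P(|Y\<^sub>0| > s, |Y\<^sub>j| = s c) = s\<^sup>-\<^sup>\<alpha> P(|Y\<^sub>j| = c)\<close> for \<open>s \<ge> 1\<close>: an atom of \<open>|Y\<^sub>j|\<close> at some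
  \<open>c > 0\<close> would give atoms at every point of \<open>[c, 2c]\<close>.\<close>

section \<open>Homogeneity of the tail process\<close>

lemma tail_process_tendsto_pair:
  fixes \<phi> \<psi> :: "real \<Rightarrow> real"
  assumes tail: "tail_process M X Y \<alpha>"
    and cont: "continuous_on UNIV \<phi>" "continuous_on UNIV \<psi>"
    and bound: "\<And>r. \<bar>\<phi> r\<bar> \<le> 1" "\<And>r. \<bar>\<psi> r\<bar> \<le> 1" and c: "0 < c"
  shows "((\<lambda>x. (\<integral>\<omega>. indicator {\<omega>\<in>space M. x < \<bar>X 0 \<omega>\<bar>} \<omega>
                       * (\<phi> (\<bar>X 0 \<omega>\<bar> / (c * x)) * \<psi> (X j \<omega> / (c * x))) \<partial>M)
                / measure M {\<omega>\<in>space M. x < \<bar>X 0 \<omega>\<bar>})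
          \<longlongrightarrow> (\<integral>\<omega>. \<phi> (\<bar>Y 0 \<omega>\<bar> / c) * \<psi> (Y j \<omega> / c) \<partial>M)) at_top"
proof -
  define h where "h f = \<phi> (\<bar>f 0\<bar> / c) * \<psi> (f j / c)" for f :: "int \<Rightarrow> real"
  have "continuous_on UNIV h"
    unfolding h_def
    by (intro continuous_on_mult continuous_on_compose2[OF cont(1)] continuous_on_compose2[OF cont(2)]
          continuous_intros) (use c in auto)
  moreover have "bounded (range h)"
    using bound by (auto simp: h_def bounded_iff abs_mult intro!: exI[of _ 1] mult_le_one)
  ultimately have lim: "((\<lambda>x. (\<integral>\<omega>. indicator {\<omega>\<in>space M. x < \<bar>X 0 \<omega>\<bar>} \<omega>
                               * h (restrict (\<lambda>n. X n \<omega> / x) {0, j}) \<partial>M)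
                        / measure M {\<omega>\<in>space M. x < \<bar>X 0 \<omega>\<bar>})
                  \<longlongrightarrow> (\<integral>\<omega>. h (restrict (\<lambda>n. Y n \<omega>) {0, j}) \<partial>M)) at_top"
    using tail unfolding tail_process_def by auto
  have h_eq: "h (restrict (\<lambda>n. X n \<omega> / x) {0, j}) = \<phi> (\<bar>X 0 \<omega>\<bar> / (c * x)) * \<psi> (X j \<omega> / (c * x))"
    if "0 < x" for x \<omega>
    using that by (simp add: h_def abs_divide mult.commute)
  have "\<forall>\<^sub>F x in at_top.
      (\<integral>\<omega>. indicator {\<omega>\<in>space M. x < \<bar>X 0 \<omega>\<bar>} \<omega> * h (restrict (\<lambda>n. X n \<omega> / x) {0, j}) \<partial>M)
        / measure M {\<omega>\<in>space M. x < \<bar>X 0 \<omega>\<bar>}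
    = (\<integral>\<omega>. indicator {\<omega>\<in>space M. x < \<bar>X 0 \<omega>\<bar>} \<omega>
          * (\<phi> (\<bar>X 0 \<omega>\<bar> / (c * x)) * \<psi> (X j \<omega> / (c * x))) \<partial>M)
        / measure M {\<omega>\<in>space M. x < \<bar>X 0 \<omega>\<bar>}"
    using eventually_gt_at_top[of 0] by eventually_elim (simp add: h_eq)
  from Lim_transform_eventually[OF lim this] show ?thesis by (simp add: h_def)
qed

lemma tail_process_scaling_identity:
  fixes \<phi> \<psi> :: "real \<Rightarrow> real"
  assumes tail: "tail_process M X Y \<alpha>"
    and cont: "continuous_on UNIV \<phi>" "continuous_on UNIV \<psi>"
    and bound: "\<And>r. \<bar>\<phi> r\<bar> \<le> 1" "\<And>r. \<bar>\<psi> r\<bar> \<le> 1"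
    and \<phi>_vanish: "\<And>r. r \<le> 1 \<Longrightarrow> \<phi> r = 0" and s: "1 \<le> s"
  shows "(\<integral>\<omega>. \<phi> (\<bar>Y 0 \<omega>\<bar> / s) * \<psi> (Y j \<omega> / s) \<partial>M) * (\<integral>\<omega>. \<phi> \<bar>Y 0 \<omega>\<bar> \<partial>M)
       = (\<integral>\<omega>. \<phi> (\<bar>Y 0 \<omega>\<bar> / s) \<partial>M) * (\<integral>\<omega>. \<phi> \<bar>Y 0 \<omega>\<bar> * \<psi> (Y j \<omega>) \<partial>M)"
proof -
  define P where "P x = measure M {\<omega>\<in>space M. x < \<bar>X 0 \<omega>\<bar>}" for x
  define N where "N c g x = (\<integral>\<omega>. indicator {\<omega>\<in>space M. x < \<bar>X 0 \<omega>\<bar>} \<omega>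
                              * (\<phi> (\<bar>X 0 \<omega>\<bar> / (c * x)) * g (X j \<omega> / (c * x))) \<partial>M)"
    for c x and g :: "real \<Rightarrow> real"
  have lim: "((\<lambda>x. N c g x / P x) \<longlongrightarrow> (\<integral>\<omega>. \<phi> (\<bar>Y 0 \<omega>\<bar> / c) * g (Y j \<omega> / c) \<partial>M)) at_top"
    if "continuous_on UNIV g" "\<And>r. \<bar>g r\<bar> \<le> 1" "0 < c" for c g
    unfolding N_def P_def by (rule tail_process_tendsto_pair[OF tail cont(1) that(1) bound(1) that(2,3)])
  have lim_scaled: "((\<lambda>x. N 1 g (s * x) / P (s * x)) \<longlongrightarrow> (\<integral>\<omega>. \<phi> \<bar>Y 0 \<omega>\<bar> * g (Y j \<omega>) \<partial>M)) at_top"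
    if "continuous_on UNIV g" "\<And>r. \<bar>g r\<bar> \<le> 1" for g
  proof -
    have "filterlim (\<lambda>x. s * x) at_top at_top"
      using s by (intro filterlim_tendsto_pos_mult_at_top[OF tendsto_const]) (auto simp: filterlim_ident)
    then show ?thesis
      using filterlim_compose[OF lim[OF that zero_less_one]] by simp
  qed
  \<comment> \<open>Between the two thresholds \<open>x < |X\<^sub>0| \<le> s x\<close> the factor \<open>\<phi>(|X\<^sub>0|/(s x))\<close> vanishes.\<close>
  have shift: "N s g x = N 1 g (s * x)" if "0 < x" for g x
    unfolding N_def
  proof (rule Bochner_Integration.integral_cong[OF refl])
    fix \<omega>
    have "\<phi> (\<bar>X 0 \<omega>\<bar> / (s * x)) = 0" if "\<bar>X 0 \<omega>\<bar> \<le> s * x"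
      using that \<open>0 < x\<close> s by (intro \<phi>_vanish) (simp add: divide_le_eq)
    moreover have "x < \<bar>X 0 \<omega>\<bar>" if "s * x < \<bar>X 0 \<omega>\<bar>"
      using that \<open>0 < x\<close> s by (smt (verit) mult_le_cancel_right1)
    ultimately show "indicator {\<omega>\<in>space M. x < \<bar>X 0 \<omega>\<bar>} \<omega> * (\<phi> (\<bar>X 0 \<omega>\<bar> / (s * x)) * g (X j \<omega> / (s * x)))
        = indicator {\<omega>\<in>space M. s * x < \<bar>X 0 \<omega>\<bar>} \<omega> * (\<phi> (\<bar>X 0 \<omega>\<bar> / (1 * (s * x))) * g (X j \<omega> / (1 * (s * x))))"
      by (cases "s * x < \<bar>X 0 \<omega>\<bar>") (auto simp: indicator_def)
  qed
  have one: "continuous_on UNIV (\<lambda>_. 1 :: real)" "\<And>r::real. \<bar>1::real\<bar> \<le> 1" by auto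
  \<comment> \<open>Both sides are limits of \<open>N\<^sub>1\<^sub>\<psi>(s x) N\<^sub>1\<^sub>1(s x) / (P x P(s x))\<close>.\<close>
  have eq: "\<forall>\<^sub>F x in at_top. N s \<psi> x / P x * (N 1 (\<lambda>_. 1) (s * x) / P (s * x))
                      = N s (\<lambda>_. 1) x / P x * (N 1 \<psi> (s * x) / P (s * x))"
    using eventually_gt_at_top[of 0] by eventually_elim (simp add: shift)
  have lhs: "((\<lambda>x. N s \<psi> x / P x * (N 1 (\<lambda>_. 1) (s * x) / P (s * x))) \<longlongrightarrow>
      (\<integral>\<omega>. \<phi> (\<bar>Y 0 \<omega>\<bar> / s) * \<psi> (Y j \<omega> / s) \<partial>M) * (\<integral>\<omega>. \<phi> \<bar>Y 0 \<omega>\<bar> \<partial>M)) at_top"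
    using tendsto_mult[OF lim[OF cont(2) bound(2)] lim_scaled[OF one]] s by simp
  have rhs: "((\<lambda>x. N s (\<lambda>_. 1) x / P x * (N 1 \<psi> (s * x) / P (s * x))) \<longlongrightarrow>
      (\<integral>\<omega>. \<phi> (\<bar>Y 0 \<omega>\<bar> / s) \<partial>M) * (\<integral>\<omega>. \<phi> \<bar>Y 0 \<omega>\<bar> * \<psi> (Y j \<omega>) \<partial>M)) at_top"
    using tendsto_mult[OF lim[OF one] lim_scaled[OF cont(2) bound(2)]] s by simp
  show ?thesis
    using tendsto_unique[OF trivial_limit_at_top_linorder tendsto_cong[THEN iffD1, OF eq lhs] rhs] .
qed

lemma (in finite_measure) tendsto_integral_measure:
  fixes f :: "nat \<Rightarrow> 'a \<Rightarrow> real"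
  assumes [measurable]: "\<And>n. f n \<in> borel_measurable M" "S \<in> sets M"
    and bound: "\<And>n \<omega>. \<omega> \<in> space M \<Longrightarrow> \<bar>f n \<omega>\<bar> \<le> 1"
    and lim: "\<And>\<omega>. \<omega> \<in> space M \<Longrightarrow> (\<lambda>n. f n \<omega>) \<longlonglongrightarrow> indicator S \<omega>"
  shows "(\<lambda>n. \<integral>\<omega>. f n \<omega> \<partial>M) \<longlonglongrightarrow> measure M S"
proof -
  have "(\<lambda>n. \<integral>\<omega>. f n \<omega> \<partial>M) \<longlonglongrightarrow> (\<integral>\<omega>. indicator S \<omega> \<partial>M)"
    by (rule integral_dominated_convergence[where w="\<lambda>_. 1"]) (use bound lim in \<open>auto intro!: AE_I2\<close>)
  then show ?thesis by simp
qed

lemma ramp_LIMSEQ: "(\<lambda>n. min 1 (max 0 (real n * (r - 1)))) \<longlonglongrightarrow> (if 1 < r then 1 else (0::real))"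
proof (cases "1 < r")
  case True
  obtain N :: nat where N: "1 / (r - 1) < N" using reals_Archimedean2 by blast
  have "min 1 (max 0 (real n * (r - 1))) = 1" if "N \<le> n" for n
  proof -
    have "1 < real N * (r - 1)" using N True by (simp add: divide_less_eq)
    also have "\<dots> \<le> real n * (r - 1)" using that True by (intro mult_right_mono) auto
    finally show ?thesis by simp
  qed
  then have "eventually (\<lambda>n. min 1 (max 0 (real n * (r - 1))) = 1) sequentially"
    unfolding eventually_sequentially by blast
  then show ?thesis using True by (simp add: tendsto_eventually)
next
  case False
  then show ?thesis by (simp add: mult_nonneg_nonpos)
qed

lemma tent_LIMSEQ:
  assumes "0 \<le> (d::real)"
  shows "(\<lambda>n. max 0 (1 - real n * d)) \<longlonglongrightarrow> (if d = 0 then 1 else 0)"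
proof (cases "d = 0")
  case False
  then have "0 < d" using assms by simp
  obtain N :: nat where N: "1 / d < N" using reals_Archimedean2 by blast
  have "max 0 (1 - real n * d) = 0" if "N \<le> n" for n
  proof -
    have "1 < real N * d" using N \<open>0 < d\<close> by (simp add: divide_less_eq)
    also have "\<dots> \<le> real n * d" using that \<open>0 < d\<close> by (intro mult_right_mono) auto
    finally show ?thesis by simp
  qed
  then have "eventually (\<lambda>n. max 0 (1 - real n * d) = 0) sequentially"
    unfolding eventually_sequentially by blast
  then show ?thesis using False by (simp add: tendsto_eventually)
qed simp

lemma tail_process_scaling_measure:
  assumes "prob_space M" and tail: "tail_process M X Y \<alpha>"
    and [measurable]: "\<And>n. Y n \<in> borel_measurable M" and s: "1 \<le> s"
  shows "measure M {\<omega>\<in>space M. s < \<bar>Y 0 \<omega>\<bar> \<and> \<bar>Y j \<omega>\<bar> = s * c}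
       = s powr (-\<alpha>) * measure M {\<omega>\<in>space M. \<bar>Y j \<omega>\<bar> = c}"
proof -
  interpret prob_space M by fact
  have Y0: "measure M {\<omega>\<in>space M. y < \<bar>Y 0 \<omega>\<bar>} = y powr (-\<alpha>)" if "1 \<le> y" for y
    using tail that unfolding tail_process_def by auto
  \<comment> \<open>Continuous approximations of the indicators of \<open>r > 1\<close> and of \<open>|y| = c\<close>.\<close>
  define \<phi> where "\<phi> n r = min 1 (max 0 (real n * (r - 1)))" for n :: nat and r :: real
  define \<psi> where "\<psi> n y = max 0 (1 - real n * \<bar>\<bar>y\<bar> - c\<bar>)" for n :: nat and y :: real
  have [measurable]: "\<phi> n \<in> borel_measurable borel" "\<psi> n \<in> borel_measurable borel" for n
    unfolding \<phi>_def \<psi>_def by measurable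
  have \<phi>_lim: "(\<lambda>n. \<phi> n r) \<longlonglongrightarrow> (if 1 < r then 1 else 0)" for r
    unfolding \<phi>_def by (rule ramp_LIMSEQ)
  have \<phi>_to_1: "(\<lambda>n. \<phi> n r) \<longlonglongrightarrow> 1" if "1 < r" for r
    using \<phi>_lim[of r] that by simp
  have \<phi>_to_0: "(\<lambda>n. \<phi> n r) \<longlonglongrightarrow> 0" if "\<not> 1 < r" for r
    using \<phi>_lim[of r] that by simp
  have \<psi>_lim: "(\<lambda>n. \<psi> n y) \<longlonglongrightarrow> (if \<bar>y\<bar> = c then 1 else 0)" for y
    using tent_LIMSEQ[of "\<bar>\<bar>y\<bar> - c\<bar>"] unfolding \<psi>_def by simp
  have bound: "\<bar>\<phi> n r\<bar> \<le> 1" "\<bar>\<psi> n r\<bar> \<le> 1" for n r by (simp_all add: \<phi>_def \<psi>_def)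
  have scaling: "(\<integral>\<omega>. \<phi> n (\<bar>Y 0 \<omega>\<bar> / s) * \<psi> n (Y j \<omega> / s) \<partial>M) * (\<integral>\<omega>. \<phi> n \<bar>Y 0 \<omega>\<bar> \<partial>M)
      = (\<integral>\<omega>. \<phi> n (\<bar>Y 0 \<omega>\<bar> / s) \<partial>M) * (\<integral>\<omega>. \<phi> n \<bar>Y 0 \<omega>\<bar> * \<psi> n (Y j \<omega>) \<partial>M)" for n
    by (rule tail_process_scaling_identity[OF tail _ _ bound])
       (use s in \<open>auto simp: \<phi>_def \<psi>_def mult_nonneg_nonpos intro!: continuous_intros\<close>)
  have L1: "(\<lambda>n. \<integral>\<omega>. \<phi> n (\<bar>Y 0 \<omega>\<bar> / s) * \<psi> n (Y j \<omega> / s) \<partial>M)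
      \<longlonglongrightarrow> measure M {\<omega>\<in>space M. 1 < \<bar>Y 0 \<omega>\<bar> / s \<and> \<bar>Y j \<omega> / s\<bar> = c}"
    by (rule tendsto_integral_measure)
       (use \<phi>_lim \<psi>_lim bound in \<open>auto simp: abs_mult mult_le_one indicator_def intro!: tendsto_eq_intros\<close>)
  have L2: "(\<lambda>n. \<integral>\<omega>. \<phi> n \<bar>Y 0 \<omega>\<bar> \<partial>M) \<longlonglongrightarrow> measure M {\<omega>\<in>space M. 1 < \<bar>Y 0 \<omega>\<bar>}"
    by (rule tendsto_integral_measure) (use bound in \<open>auto simp: indicator_def intro: \<phi>_to_0 \<phi>_to_1\<close>)
  have L3: "(\<lambda>n. \<integral>\<omega>. \<phi> n (\<bar>Y 0 \<omega>\<bar> / s) \<partial>M) \<longlonglongrightarrow> measure M {\<omega>\<in>space M. 1 < \<bar>Y 0 \<omega>\<bar> / s}"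
    by (rule tendsto_integral_measure) (use bound in \<open>auto simp: indicator_def intro: \<phi>_to_0 \<phi>_to_1\<close>)
  have L4: "(\<lambda>n. \<integral>\<omega>. \<phi> n \<bar>Y 0 \<omega>\<bar> * \<psi> n (Y j \<omega>) \<partial>M)
      \<longlonglongrightarrow> measure M {\<omega>\<in>space M. 1 < \<bar>Y 0 \<omega>\<bar> \<and> \<bar>Y j \<omega>\<bar> = c}"
    by (rule tendsto_integral_measure)
       (use \<phi>_lim \<psi>_lim bound in \<open>auto simp: abs_mult mult_le_one indicator_def intro!: tendsto_eq_intros\<close>)
  have "measure M {\<omega>\<in>space M. 1 < \<bar>Y 0 \<omega>\<bar> / s \<and> \<bar>Y j \<omega> / s\<bar> = c}
                    * measure M {\<omega>\<in>space M. 1 < \<bar>Y 0 \<omega>\<bar>}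
                 = measure M {\<omega>\<in>space M. 1 < \<bar>Y 0 \<omega>\<bar> / s}
                    * measure M {\<omega>\<in>space M. 1 < \<bar>Y 0 \<omega>\<bar> \<and> \<bar>Y j \<omega>\<bar> = c}"
    using LIMSEQ_unique[OF tendsto_mult[OF L1 L2]] tendsto_mult[OF L3 L4] scaling by simp
  moreover have "{\<omega>\<in>space M. 1 < \<bar>Y 0 \<omega>\<bar> / s \<and> \<bar>Y j \<omega> / s\<bar> = c}
               = {\<omega>\<in>space M. s < \<bar>Y 0 \<omega>\<bar> \<and> \<bar>Y j \<omega>\<bar> = s * c}"
       "{\<omega>\<in>space M. 1 < \<bar>Y 0 \<omega>\<bar> / s} = {\<omega>\<in>space M. s < \<bar>Y 0 \<omega>\<bar>}"
    using s by (auto simp: abs_divide field_simps)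
  moreover have "AE \<omega> in M. 1 < \<bar>Y 0 \<omega>\<bar>"
    using Y0[of 1] by (subst prob_Collect_eq_1[symmetric]) simp_all
  then have "measure M {\<omega>\<in>space M. 1 < \<bar>Y 0 \<omega>\<bar> \<and> \<bar>Y j \<omega>\<bar> = c} = measure M {\<omega>\<in>space M. \<bar>Y j \<omega>\<bar> = c}"
    by (intro measure_eq_AE) auto
  ultimately show ?thesis using Y0[of 1] Y0[OF s] by simp
qed

lemma tail_process_abs_no_atom:
  assumes P: "prob_space M" and tail: "tail_process M X Y \<alpha>"
    and Y_meas [measurable]: "\<And>n. Y n \<in> borel_measurable M" and c: "0 < c"
  shows "measure M {\<omega>\<in>space M. \<bar>Y j \<omega>\<bar> = c} = 0"
proof (rule ccontr)
  interpret prob_space M by fact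
  assume "measure M {\<omega>\<in>space M. \<bar>Y j \<omega>\<bar> = c} \<noteq> 0"
  then have atom: "0 < measure M {\<omega>\<in>space M. \<bar>Y j \<omega>\<bar> = c}"
    using measure_nonneg[of M] by (simp add: order_less_le)
  define D where "D = distr M borel (\<lambda>\<omega>. \<bar>Y j \<omega>\<bar>)"
  interpret D: finite_measure D
    unfolding D_def by (rule finite_measure_distr) measurable
  have "{c..2*c} \<subseteq> {y. measure D {y} \<noteq> 0}"
  proof
    fix y assume y: "y \<in> {c..2*c}"
    define s where "s = y / c"
    have s: "1 \<le> s" "y = s * c" using y c by (auto simp: s_def)
    have "0 < s powr (-\<alpha>) * measure M {\<omega>\<in>space M. \<bar>Y j \<omega>\<bar> = c}"
      using s atom by simp
    also have "\<dots> = measure M {\<omega>\<in>space M. s < \<bar>Y 0 \<omega>\<bar> \<and> \<bar>Y j \<omega>\<bar> = y}"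
      using tail_process_scaling_measure[OF P tail Y_meas s(1)] s(2) by simp
    also have "\<dots> \<le> measure M {\<omega>\<in>space M. \<bar>Y j \<omega>\<bar> = y}"
      by (rule finite_measure_mono) auto
    also have "\<dots> = measure D {y}"
      unfolding D_def by (subst measure_distr) (auto intro!: arg_cong[where f="measure M"])
    finally show "y \<in> {y. measure D {y} \<noteq> 0}" by simp
  qed
  then have "countable {c..2*c}"
    using D.countable_support countable_subset by blast
  then show False
    using c uncountable_closed_interval[of c "2*c"] by simp
qed

lemma tail_process_AE_abs_neq:
  assumes P: "prob_space M" and tail: "tail_process M X Y \<alpha>"
    and Y_meas [measurable]: "\<And>n. Y n \<in> borel_measurable M" and c: "0 < c"
  shows "AE \<omega> in M. \<forall>j. \<bar>Y j \<omega>\<bar> \<noteq> c"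
proof -
  interpret prob_space M by fact
  have "AE \<omega> in M. \<bar>Y j \<omega>\<bar> \<noteq> c" for j
    using tail_process_abs_no_atom[OF P tail Y_meas c, of j] by (subst (asm) prob_Collect_eq_0) simp_all
  then show ?thesis by (simp add: AE_all_countable)
qed

section \<open>The homogeneous Poisson process on the unit interval\<close>

lemma hom_poisson_01_count:
  assumes "prob_space M" and H: "hom_poisson_01 M lam K T"
    and B: "B \<in> sets borel" "B \<subseteq> {0..1}"
  shows "pcount K T B \<in> measurable M (count_space UNIV)"
    and "measure M {\<omega>\<in>space M. pcount K T B \<omega> = n}
           = (lam * measure lborel B) ^ n / fact n * exp (- (lam * measure lborel B))"
proof -
  interpret prob_space M by fact
  have "(\<forall>j<1::nat. B \<in> sets borel \<and> B \<subseteq> {0..1}) \<and> disjoint_family_on (\<lambda>_::nat. B) {..<1}"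
    using B by (simp add: disjoint_family_on_def)
  note law = H[unfolded hom_poisson_01_def, THEN conjunct2, THEN conjunct2, THEN conjunct2,
      rule_format, OF this]
  then show "pcount K T B \<in> measurable M (count_space UNIV)"
    unfolding indep_vars_def by auto
  show "measure M {\<omega>\<in>space M. pcount K T B \<omega> = n}
          = (lam * measure lborel B) ^ n / fact n * exp (- (lam * measure lborel B))"
    using law by auto
qed

lemma hom_poisson_01_AE_no_point_at:
  assumes P: "prob_space M" and H: "hom_poisson_01 M lam K T" and t: "t \<in> {0..1}"
  shows "AE \<omega> in M. \<forall>i<K \<omega>. T i \<omega> \<noteq> t"
proof -
  interpret prob_space M by fact
  have [measurable]: "pcount K T {t} \<in> measurable M (count_space UNIV)"
    and "measure M {\<omega>\<in>space M. pcount K T {t} \<omega> = 0} = 1"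
    using hom_poisson_01_count[OF P H, of "{t}"] t by auto
  then have "AE \<omega> in M. pcount K T {t} \<omega> = 0"
    by (subst (asm) prob_Collect_eq_1) simp_all
  then show ?thesis
    by eventually_elim (auto simp: pcount_def)
qed

lemma one_minus_exp_minus_le_square:
  assumes "0 \<le> (\<mu>::real)"
  shows "1 - exp (-\<mu>) - \<mu> * exp (-\<mu>) \<le> \<mu>\<^sup>2"
proof -
  have "(1 + \<mu>) * (1 - \<mu>) \<le> (1 + \<mu>) * exp (-\<mu>)"
    using assms exp_ge_add_one_self[of "-\<mu>"] by (intro mult_left_mono) auto
  then show ?thesis by (simp add: algebra_simps power2_eq_square)
qed

lemma unit_interval_grid_cover:
  assumes t: "t \<in> {0..(1::real)}" and n: "0 < n"
  shows "\<exists>k<n. t \<in> {real k / real n .. real (Suc k) / real n}"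
proof (cases "t = 1")
  case True
  then show ?thesis using n by (intro exI[of _ "n - 1"]) (auto simp: field_simps of_nat_diff)
next
  case False
  define k where "k = nat \<lfloor>t * n\<rfloor>"
  have "real k = of_int \<lfloor>t * n\<rfloor>" using t by (simp add: k_def)
  then have "real k \<le> t * n" "t * n < real k + 1" by linarith+
  moreover have "t * n < n" using t False n by simp
  ultimately have "k < n" by (simp add: of_nat_less_iff[symmetric])
  with \<open>real k \<le> t * n\<close> \<open>t * n < real k + 1\<close> show ?thesis
    using n by (intro exI[of _ k]) (auto simp: field_simps)
qed

lemma hom_poisson_01_prob_two_points_le:
  assumes P: "prob_space M" and H: "hom_poisson_01 M lam K T" and lam: "0 \<le> lam"
    and B: "B \<in> sets borel" "B \<subseteq> {0..1}"
  shows "measure M {\<omega>\<in>space M. 2 \<le> pcount K T B \<omega>} \<le> (lam * measure lborel B)\<^sup>2"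
proof -
  interpret prob_space M by fact
  let ?E = "\<lambda>m. {\<omega>\<in>space M. pcount K T B \<omega> = m}"
  let ?G = "{\<omega>\<in>space M. 2 \<le> pcount K T B \<omega>}"
  let ?\<mu> = "lam * measure lborel B"
  note count = hom_poisson_01_count[OF P H B]
  have [measurable]: "?E m \<in> sets M" "?G \<in> sets M" for m
    using count(1) by measurable
  have "space M = (?E 0 \<union> ?E 1) \<union> ?G" by auto
  then have "1 = prob ((?E 0 \<union> ?E 1) \<union> ?G)" using prob_space by simp
  also have "\<dots> = prob (?E 0 \<union> ?E 1) + prob ?G"
    by (rule finite_measure_Union) auto
  also have "prob (?E 0 \<union> ?E 1) = prob (?E 0) + prob (?E 1)"
    by (rule finite_measure_Union) auto
  finally have "prob ?G = 1 - exp (- ?\<mu>) - ?\<mu> * exp (- ?\<mu>)"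
    using count(2)[of 0] count(2)[of 1] by simp
  also have "\<dots> \<le> ?\<mu>\<^sup>2" by (rule one_minus_exp_minus_le_square) (use lam in simp)
  finally show ?thesis .
qed

text \<open>A double point lies in some cell of every grid of mesh \<open>1/n\<close>, and the \<open>n\<close> cells together
  carry two points with probability at most \<open>n (\<lambda>/n)\<^sup>2 = \<lambda>\<^sup>2/n\<close>.\<close>
lemma hom_poisson_01_AE_simple:
  assumes P: "prob_space M" and H: "hom_poisson_01 M lam K T" and lam: "0 \<le> lam"
  shows "AE \<omega> in M. \<forall>i<K \<omega>. \<forall>i'<K \<omega>. i \<noteq> i' \<longrightarrow> T i \<omega> \<noteq> T i' \<omega>"
proof -
  interpret prob_space M by fact
  have [measurable]: "K \<in> measurable M (count_space UNIV)" "\<And>i. T i \<in> borel_measurable M"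
    and T_01: "\<And>\<omega> i. \<omega> \<in> space M \<Longrightarrow> i < K \<omega> \<Longrightarrow> T i \<omega> \<in> {0..1}"
    using H unfolding hom_poisson_01_def by auto
  define D where "D = {\<omega>\<in>space M. \<exists>i<K \<omega>. \<exists>i'<K \<omega>. i \<noteq> i' \<and> T i \<omega> = T i' \<omega>}"
  have D_sets [measurable]: "D \<in> sets M" unfolding D_def by measurable
  have D_le: "prob D \<le> lam\<^sup>2 / n" if n: "0 < n" for n :: nat
  proof -
    define I where "I k = {real k / real n .. real (Suc k) / real n}" for k
    define G where "G k = {\<omega>\<in>space M. 2 \<le> pcount K T (I k) \<omega>}" for k
    have I: "I k \<in> sets borel" "I k \<subseteq> {0..1}" "measure lborel (I k) = 1 / n" if "k < n" for k
      using that n unfolding I_def by (auto simp: field_simps)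
    have G_sets: "G k \<in> sets M" if "k < n" for k
      using hom_poisson_01_count(1)[OF P H I(1,2)[OF that]] unfolding G_def by measurable
    have "D \<subseteq> (\<Union>k<n. G k)"
    proof
      fix \<omega> assume "\<omega> \<in> D"
      then obtain i i' where ii: "\<omega> \<in> space M" "i < K \<omega>" "i' < K \<omega>" "i \<noteq> i'" "T i \<omega> = T i' \<omega>"
        unfolding D_def by auto
      obtain k where "k < n" "T i \<omega> \<in> I k"
        using unit_interval_grid_cover[OF T_01[OF ii(1,2)] n] unfolding I_def by auto
      then have "{i, i'} \<subseteq> {i. i < K \<omega> \<and> T i \<omega> \<in> I k}" using ii by auto
      then have "card {i, i'} \<le> pcount K T (I k) \<omega>"
        unfolding pcount_def by (rule card_mono[rotated]) simp
      then have "2 \<le> pcount K T (I k) \<omega>" using ii(4) by simp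
      then show "\<omega> \<in> (\<Union>k<n. G k)" using \<open>k < n\<close> ii(1) unfolding G_def by auto
    qed
    then have "prob D \<le> prob (\<Union>k<n. G k)"
      using G_sets by (intro finite_measure_mono) auto
    also have "\<dots> \<le> (\<Sum>k<n. prob (G k))"
      using G_sets by (intro finite_measure_subadditive_finite) auto
    also have "\<dots> \<le> (\<Sum>k<n. (lam / n)\<^sup>2)"
      using hom_poisson_01_prob_two_points_le[OF P H lam I(1,2)] I(3)
      by (intro sum_mono) (simp add: G_def)
    also have "\<dots> = lam\<^sup>2 / n" using n by (simp add: power2_eq_square field_simps)
    finally show ?thesis .
  qed
  have "(\<lambda>n. lam\<^sup>2 / real (Suc n)) \<longlonglongrightarrow> 0"
    using tendsto_mult[OF tendsto_const[of "lam\<^sup>2"] LIMSEQ_inverse_real_of_nat] by (simp add: divide_inverse)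
  then have "prob D \<le> 0"
    using D_le by (intro LIMSEQ_le_const[of _ 0]) (auto simp del: of_nat_Suc)
  then have "AE \<omega> in M. \<omega> \<notin> D"
    using prob_eq_0[OF D_sets] measure_nonneg[of M D] by simp
  then show ?thesis
    using AE_space by eventually_elim (auto simp: D_def)
qed

section \<open>Clusters inherit almost sure properties of the tail process\<close>

lemma AE_cluster_of_AE_tail:
  fixes Y :: "int \<Rightarrow> 'a \<Rightarrow> real" and Z :: "nat \<Rightarrow> int \<Rightarrow> 'a \<Rightarrow> real"
  assumes "prob_space M"
    and Y_meas: "\<And>n. Y n \<in> borel_measurable M" and Z_meas: "\<And>i n. Z i n \<in> borel_measurable M"
    and law: "\<And>i A. A \<in> sets (PiM UNIV (\<lambda>_::int. borel)) \<Longrightarrow>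
                measure M {\<omega>\<in>space M. (\<lambda>j. Z i j \<omega>) \<in> A}
                = measure M {\<omega>\<in>space M. (\<lambda>j. Y j \<omega>) \<in> A \<and> (\<forall>n\<le>-1. \<bar>Y n \<omega>\<bar> \<le> 1)} / c"
    and Q_sets: "{f\<in>space (PiM UNIV (\<lambda>_::int. borel)). Q f} \<in> sets (PiM UNIV (\<lambda>_::int. borel))"
    and AE_Y: "AE \<omega> in M. Q (\<lambda>j. Y j \<omega>)"
  shows "AE \<omega> in M. \<forall>i. Q (\<lambda>j. Z i j \<omega>)"
proof -
  interpret prob_space M by fact
  define A where "A = {f\<in>space (PiM UNIV (\<lambda>_::int. borel)). \<not> Q f}"
  have A_sets: "A \<in> sets (PiM UNIV (\<lambda>_::int. borel))"
    unfolding A_def by (rule sets.sets_Collect_neg[OF Q_sets])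
  have [measurable]: "(\<lambda>\<omega> j. Y j \<omega>) \<in> measurable M (PiM UNIV (\<lambda>_::int. borel))"
    "(\<lambda>\<omega> j. Z i j \<omega>) \<in> measurable M (PiM UNIV (\<lambda>_::int. borel))" for i
    using Y_meas Z_meas by (auto intro: measurable_PiM_single')
  have "prob {\<omega>\<in>space M. (\<lambda>j. Y j \<omega>) \<in> A \<and> (\<forall>n\<le>-1. \<bar>Y n \<omega>\<bar> \<le> 1)} = 0"
    using AE_Y by (intro prob_eq_0_AE) (auto simp: A_def space_PiM)
  then have "prob {\<omega>\<in>space M. (\<lambda>j. Z i j \<omega>) \<in> A} = 0" for i
    using law[OF A_sets] by simp
  moreover have "{\<omega>\<in>space M. (\<lambda>j. Z i j \<omega>) \<in> A} \<in> sets M" for i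
    using A_sets by measurable
  ultimately have "AE \<omega> in M. Q (\<lambda>j. Z i j \<omega>)" for i
    using prob_Collect_eq_0 by (auto simp: A_def space_PiM)
  then show ?thesis by (simp add: AE_all_countable)
qed

section \<open>The point measure \<open>N\<^sup>(\<^sup>v\<^sup>)\<close> of a single realisation\<close>

text \<open>Vanishing at \<open>\<plusminus>\<infinity>\<close>, written with countable quantifiers so that it describes a measurable
  set of sequences.\<close>
definition vanishes_at_infinity :: "(int \<Rightarrow> real) \<Rightarrow> bool" where
  "vanishes_at_infinity f \<longleftrightarrow> (\<forall>m::nat. \<exists>N::nat. \<forall>n. int N \<le> \<bar>n\<bar> \<longrightarrow> \<bar>f n\<bar> \<le> 1 / real (Suc m))"

lemma vanishes_at_infinity_sets:
  "{f\<in>space (PiM UNIV (\<lambda>_::int. borel)). vanishes_at_infinity f} \<in> sets (PiM UNIV (\<lambda>_::int. borel))"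
  unfolding vanishes_at_infinity_def by measurable

lemma vanishes_at_infinityI:
  fixes f :: "int \<Rightarrow> real"
  assumes top: "((\<lambda>n. \<bar>f n\<bar>) \<longlongrightarrow> 0) at_top" and bot: "((\<lambda>n. \<bar>f n\<bar>) \<longlongrightarrow> 0) at_bot"
  shows "vanishes_at_infinity f"
  unfolding vanishes_at_infinity_def
proof
  fix m :: nat
  have \<epsilon>: "0 < 1 / real (Suc m)" by simp
  obtain N1 where N1: "\<And>n. N1 \<le> n \<Longrightarrow> \<bar>f n\<bar> < 1 / real (Suc m)"
    using order_tendstoD(2)[OF top \<epsilon>] unfolding eventually_at_top_linorder by auto
  obtain N2 where N2: "\<And>n. n \<le> N2 \<Longrightarrow> \<bar>f n\<bar> < 1 / real (Suc m)"
    using order_tendstoD(2)[OF bot \<epsilon>] unfolding eventually_at_bot_linorder by auto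
  have "\<bar>f n\<bar> \<le> 1 / real (Suc m)" if "max \<bar>N1\<bar> \<bar>N2\<bar> \<le> \<bar>n\<bar>" for n
  proof (cases "0 \<le> n")
    case True
    then show ?thesis using that N1[of n] by linarith
  next
    case False
    then show ?thesis using that N2[of n] by linarith
  qed
  then show "\<exists>N::nat. \<forall>n. int N \<le> \<bar>n\<bar> \<longrightarrow> \<bar>f n\<bar> \<le> 1 / real (Suc m)"
    by (intro exI[of _ "nat (max \<bar>N1\<bar> \<bar>N2\<bar>)"]) auto
qed

text \<open>A compact subset of \<open>[0,1] \<times> \<bbbE>\<^sub>v\<close> stays away from the axis \<open>x = 0\<close>, where a vanishing
  sequence accumulates.\<close>
lemma finite_vanishing_points_in_compact:
  fixes C :: "(real \<times> ereal) set" and f :: "int \<Rightarrow> real"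
  assumes C: "compact C" "C \<subseteq> {0..1} \<times> Eset v" and v: "0 < v" and f: "vanishes_at_infinity f"
  shows "finite {j. (t, ereal (v * f j)) \<in> C}"
proof (rule ccontr)
  define F where "F = {j. (t, ereal (v * f j)) \<in> C}"
  assume "infinite {j. (t, ereal (v * f j)) \<in> C}"
  then have inf: "infinite F" by (simp add: F_def)
  have "\<exists>j\<in>F. \<bar>f j\<bar> \<le> 1 / real (Suc m)" for m
  proof -
    obtain N :: nat where N: "\<And>n. int N \<le> \<bar>n\<bar> \<Longrightarrow> \<bar>f n\<bar> \<le> 1 / real (Suc m)"
      using f unfolding vanishes_at_infinity_def by blast
    have "\<not> F \<subseteq> {- int N..int N}"
      using inf finite_subset by blast
    then obtain j where "j \<in> F" "j \<notin> {- int N..int N}" by blast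
    then show ?thesis using N[of j] by auto
  qed
  then obtain js where js: "\<And>m. js m \<in> F" "\<And>m. \<bar>f (js m)\<bar> \<le> 1 / real (Suc m)" by metis
  have "(\<lambda>m. v * f (js m)) \<longlonglongrightarrow> 0"
  proof (rule Lim_null_comparison)
    have "v * \<bar>f (js m)\<bar> \<le> v * (1 / real (Suc m))" for m
      using js(2) v by (intro mult_left_mono) auto
    then show "\<forall>\<^sub>F m in sequentially. norm (v * f (js m)) \<le> v * (1 / real (Suc m))"
      using v by (intro always_eventually allI) (simp add: abs_mult)
    show "(\<lambda>m. v * (1 / real (Suc m))) \<longlonglongrightarrow> 0"
      using tendsto_mult[OF tendsto_const[of v] LIMSEQ_inverse_real_of_nat] by (simp add: divide_inverse)
  qed
  then have "(\<lambda>m. ereal (v * f (js m))) \<longlonglongrightarrow> ereal 0" by (rule tendsto_ereal)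
  moreover have "closed (snd ` C)"
    using C(1) by (intro compact_imp_closed compact_continuous_image continuous_intros)
  moreover have "ereal (v * f (js m)) \<in> snd ` C" for m
    using js(1)[of m] unfolding F_def by (auto intro: rev_image_eqI)
  ultimately have "ereal 0 \<in> snd ` C"
    using closed_sequentially[of "snd ` C" "\<lambda>m. ereal (v * f (js m))"] by simp
  then obtain a where "(a, ereal 0) \<in> C" by auto
  then have "ereal v < \<bar>ereal 0\<bar>" using C(2) by (auto simp: Eset_def)
  then show False using v by simp
qed

lemma Nv_eq_0_iff:
  "Nv v K T Z \<omega> B = 0 \<longleftrightarrow> \<not> (\<exists>i<K \<omega>. \<exists>j. T i \<omega> \<in> {0..1} \<and> ereal (v * Z i j \<omega>) \<in> Eset v
                                        \<and> (T i \<omega>, ereal (v * Z i j \<omega>)) \<in> B)"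
  by (auto simp: Nv_def ecard_def zero_enat_def dest!: infinite_imp_nonempty)

lemma Nv_in_Mp:
  assumes v: "0 < v" and Z: "\<And>i. vanishes_at_infinity (\<lambda>j. Z i j \<omega>)"
  shows "Nv v K T Z \<omega> \<in> Mp ({0..1} \<times> Eset v)"
proof -
  define S where "S = {(i, j). i < K \<omega> \<and> T i \<omega> \<in> {0..1} \<and> ereal (v * Z i j \<omega>) \<in> Eset v}"
  define pt where "pt = (\<lambda>(i, j). (T i \<omega>, ereal (v * Z i j \<omega>)))"
  have Nv: "Nv v K T Z \<omega> B = ecard {x\<in>S. pt x \<in> B}" for B
    unfolding Nv_def S_def pt_def by (intro arg_cong[where f=ecard]) auto
  \<comment> \<open>The atoms are indexed by \<open>\<nat> \<times> \<int>\<close>; \<open>to_nat\<close> re-indexes them by \<open>\<nat>\<close> as \<open>Mp\<close> requires.\<close>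
  have "Nv v K T Z \<omega> B = ecard {k\<in>to_nat ` S. (pt \<circ> from_nat) k \<in> B}" for B
  proof -
    have "{k\<in>to_nat ` S. (pt \<circ> from_nat) k \<in> B} = to_nat ` {x\<in>S. pt x \<in> B}" by auto
    moreover have "inj_on to_nat {x\<in>S. pt x \<in> B}" by (rule inj_on_subset[OF inj_to_nat]) simp
    ultimately show ?thesis by (simp add: Nv ecard_def finite_image_iff card_image)
  qed
  moreover have "(pt \<circ> from_nat) ` to_nat ` S \<subseteq> {0..1} \<times> Eset v"
    by (auto simp: S_def pt_def)
  moreover have "Nv v K T Z \<omega> C \<noteq> \<infinity>" if "compact C" "C \<subseteq> {0..1} \<times> Eset v" for C
  proof -
    have "{x\<in>S. pt x \<in> C} \<subseteq> (\<Union>i<K \<omega>. Pair i ` {j. (T i \<omega>, ereal (v * Z i j \<omega>)) \<in> C})"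
      by (auto simp: S_def pt_def)
    moreover have "finite (\<Union>i<K \<omega>. Pair i ` {j. (T i \<omega>, ereal (v * Z i j \<omega>)) \<in> C})"
      using finite_vanishing_points_in_compact[OF that v Z] by auto
    ultimately show ?thesis by (simp add: Nv ecard_def finite_subset)
  qed
  ultimately show ?thesis unfolding Mp_def by blast
qed

lemma Nv_in_Lambda1:
  assumes v: "0 < v" "v < u" and Z: "\<And>i. vanishes_at_infinity (\<lambda>j. Z i j \<omega>)"
    and T: "\<And>i. i < K \<omega> \<Longrightarrow> T i \<omega> \<noteq> 0 \<and> T i \<omega> \<noteq> 1"
    and level: "\<And>i j. \<bar>Z i j \<omega>\<bar> \<noteq> u / v"
  shows "Nv v K T Z \<omega> \<in> Lambda1 v u"
proof -
  have "v * Z i j \<omega> \<noteq> u \<and> v * Z i j \<omega> \<noteq> - u" for i j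
  proof -
    have "\<bar>v * Z i j \<omega>\<bar> \<noteq> u" using level[of i j] v by (simp add: abs_mult field_simps)
    then show ?thesis using v by auto
  qed
  then show ?thesis
    unfolding Lambda1_def using Nv_in_Mp[where Z = Z and \<omega> = \<omega>, OF v(1) Z] T by (auto simp: Nv_eq_0_iff)
qed

lemma Nv_in_Lambda2:
  assumes v: "0 < v" and Z: "\<And>i. vanishes_at_infinity (\<lambda>j. Z i j \<omega>)"
    and T: "\<And>i i'. i < K \<omega> \<Longrightarrow> i' < K \<omega> \<Longrightarrow> i \<noteq> i' \<Longrightarrow> T i \<omega> \<noteq> T i' \<omega>"
    and sign: "\<And>i j j'. \<not> (0 < Z i j \<omega> \<and> Z i j' \<omega> < 0)"
  shows "Nv v K T Z \<omega> \<in> Lambda2 v"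
proof -
  have "Nv v K T Z \<omega> ({t} \<times> {x. ereal v < x}) = 0 \<or> Nv v K T Z \<omega> ({t} \<times> {x. x < - ereal v}) = 0"
    for t
  proof (rule ccontr)
    assume "\<not> ?thesis"
    then obtain i j i' j' where "i < K \<omega>" "i' < K \<omega>" "T i \<omega> = t" "T i' \<omega> = t"
      and "v < v * Z i j \<omega>" "v * Z i' j' \<omega> < - v"
      by (auto simp: Nv_eq_0_iff)
    moreover from this have "0 < Z i j \<omega>" "Z i' j' \<omega> < 0"
      using v by (simp add: zero_less_mult_iff, smt (verit) mult_nonneg_nonneg)
    ultimately show False using T sign by metis
  qed
  then have "min (Nv v K T Z \<omega> ({t} \<times> {x. ereal v < x})) (Nv v K T Z \<omega> ({t} \<times> {x. x < - ereal v})) = 0"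
    for t by (metis min.absorb1 min.absorb2 zero_le)
  then show ?thesis
    unfolding Lambda2_def using Nv_in_Mp[where Z = Z and \<omega> = \<omega>, OF v Z] by blast
qed

theorem lemma3p1:
  fixes M :: "'a measure"
    and X Y :: "int \<Rightarrow> 'a \<Rightarrow> real"
    and \<alpha> v u :: real
    and K :: "'a \<Rightarrow> nat"
    and T :: "nat \<Rightarrow> 'a \<Rightarrow> real"
    and Z :: "nat \<Rightarrow> int \<Rightarrow> 'a \<Rightarrow> real"
  assumes P: "prob_space M"
    and X_meas: "\<And>n. X n \<in> borel_measurable M"
    and Y_meas: "\<And>n. Y n \<in> borel_measurable M"
    and Z_meas: "\<And>i j. Z i j \<in> borel_measurable M"
    and alpha_pos: "0 < \<alpha>"
    and stat: "strictly_stationary M X"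
    and jrv: "jointly_regvar M X \<alpha>"
    and tail: "tail_process M X Y \<alpha>"
    and theta_pos: "0 < measure M {\<omega>\<in>space M. \<forall>i\<le>-1. \<bar>Y i \<omega>\<bar> \<le> 1}"
    and Y_vanish: "AE \<omega> in M. ((\<lambda>n. \<bar>Y n \<omega>\<bar>) \<longlongrightarrow> 0) at_top \<and> ((\<lambda>n. \<bar>Y n \<omega>\<bar>) \<longlongrightarrow> 0) at_bot"
    and vu: "0 < v" "v < u"
    and poisson: "hom_poisson_01 M
                    (measure M {\<omega>\<in>space M. \<forall>i\<le>-1. \<bar>Y i \<omega>\<bar> \<le> 1} * v powr (-\<alpha>)) K T"
    and Z_iid: "prob_space.indep_vars M (\<lambda>_. PiM UNIV (\<lambda>_::int. borel)) (\<lambda>i \<omega> j. Z i j \<omega>) UNIV"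
    and Z_law: "\<And>i A. A \<in> sets (PiM UNIV (\<lambda>_::int. borel)) \<Longrightarrow>
                  measure M {\<omega>\<in>space M. (\<lambda>j. Z i j \<omega>) \<in> A}
                  = measure M {\<omega>\<in>space M. (\<lambda>j. Y j \<omega>) \<in> A \<and> (\<forall>n\<le>-1. \<bar>Y n \<omega>\<bar> \<le> 1)}
                    / measure M {\<omega>\<in>space M. \<forall>n\<le>-1. \<bar>Y n \<omega>\<bar> \<le> 1}"
    and indep_PZ: "prob_space.indep_set M
                    (sigma_sets (space M)
                      {(\<lambda>\<omega>. (K \<omega>, \<lambda>i. if i < K \<omega> then T i \<omega> else 0)) -` A \<inter> space M | A.
                         A \<in> sets (count_space UNIV \<Otimes>\<^sub>M PiM UNIV (\<lambda>_::nat. borel))})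
                    (sigma_sets (space M)
                      {(\<lambda>\<omega> i j. Z i j \<omega>) -` A \<inter> space M | A.
                         A \<in> sets (PiM UNIV (\<lambda>_::nat. PiM UNIV (\<lambda>_::int. borel)))})"
    and no_opp_sign: "AE \<omega> in M. \<forall>i j. \<not> (0 < Y i \<omega> \<and> Y j \<omega> < 0)"
  shows "AE \<omega> in M. Nv v K T Z \<omega> \<in> Lambda1 v u \<inter> Lambda2 v"
proof -
  interpret prob_space M by (rule P)
  define \<theta> where "\<theta> = measure M {\<omega>\<in>space M. \<forall>i\<le>-1. \<bar>Y i \<omega>\<bar> \<le> 1}"
  have H: "hom_poisson_01 M (\<theta> * v powr (-\<alpha>)) K T" and "0 \<le> \<theta> * v powr (-\<alpha>)"
    using poisson by (simp_all add: \<theta>_def)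
  have cluster: "AE \<omega> in M. \<forall>i. Q (\<lambda>j. Z i j \<omega>)"
    if "AE \<omega> in M. Q (\<lambda>j. Y j \<omega>)"
      and "{f\<in>space (PiM UNIV (\<lambda>_::int. borel)). Q f} \<in> sets (PiM UNIV (\<lambda>_::int. borel))" for Q
    by (rule AE_cluster_of_AE_tail[OF P Y_meas Z_meas _ that(2,1)]) (rule Z_law)
  have Y_vanishes: "AE \<omega> in M. vanishes_at_infinity (\<lambda>j. Y j \<omega>)"
    using Y_vanish by eventually_elim (simp add: vanishes_at_infinityI)
  have "AE \<omega> in M. \<forall>i<K \<omega>. T i \<omega> \<noteq> 0" "AE \<omega> in M. \<forall>i<K \<omega>. T i \<omega> \<noteq> 1"
    by (rule hom_poisson_01_AE_no_point_at[OF P H]; simp)+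
  moreover have "AE \<omega> in M. \<forall>i<K \<omega>. \<forall>i'<K \<omega>. i \<noteq> i' \<longrightarrow> T i \<omega> \<noteq> T i' \<omega>"
    by (rule hom_poisson_01_AE_simple[OF P H]) fact
  moreover have "AE \<omega> in M. \<forall>i. vanishes_at_infinity (\<lambda>j. Z i j \<omega>)"
    using Y_vanishes by (rule cluster) (rule vanishes_at_infinity_sets)
  moreover have "AE \<omega> in M. \<forall>i. \<forall>j j'. \<not> (0 < Z i j \<omega> \<and> Z i j' \<omega> < 0)"
    using no_opp_sign by (rule cluster[of "\<lambda>f. \<forall>j j'. \<not> (0 < f j \<and> f j' < 0)"]) measurable
  moreover have "AE \<omega> in M. \<forall>i. \<forall>j. \<bar>Z i j \<omega>\<bar> \<noteq> u / v"
    using tail_process_AE_abs_neq[OF P tail Y_meas, of "u / v"] vu by (intro cluster) (simp, measurable)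
  ultimately show ?thesis
    by eventually_elim (auto intro!: Nv_in_Lambda1 Nv_in_Lambda2 vu)
qed

end
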